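(* Let $c\in\mathbb{C}(t)\cup\{\infty\}$ be a marked point. Then $c$ is persistently preperiodic for the family $f_t$ (i.e. $c(t)$ has finite forward orbit under $f_t$ for all $t\in\mathbb{C}\setminus\{0,1\}$) if and only if $c(t)$ is equal to one of $0,1,\infty,t$.
   Context: $f_t(z)=\frac{(z^2-t)^2}{4z(z-1)(z-t)}$ for $t\in\mathbb{C}\setminus\{0,1\}$ is the degree-4 Lattès family on $\mathbb{P}^1$ (induced by multiplication by 2 on the Legendre curve $y^2=x(x-1)(x-t)$). A marked point is an element $c\in\mathbb{C}(t)\cup\{\infty\}$, viewed as a holomorphic map $\mathbb{C}\setminus\{0,1\}\to\mathbb{P}^1$. *)

theory Defs
  imports "HOL-Computational_Algebra.Computational_Algebra"
          "HOL-Computational_Algebra.Normalized_Fraction"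
          "HOL-Computational_Algebra.Field_as_Ring"
begin

text \<open>The Riemann sphere P^1 is modelled as complex option: Some z is the point z of C,
  None is the point at infinity.\<close>

definition lattes :: "complex \<Rightarrow> complex option \<Rightarrow> complex option" where
  "lattes t w = (case w of
      None \<Rightarrow> None
    | Some z \<Rightarrow> (if 4 * z * (z - 1) * (z - t) = 0 then None
                 else Some ((z\<^sup>2 - t)\<^sup>2 / (4 * z * (z - 1) * (z - t)))))"

text \<open>A marked point: an element of C(t) (fractions of complex polynomials) or infinity (None).\<close>
type_synonym marked_point = "complex poly fract option"

text \<open>Value of a rational function at t in P^1, computed from its reduced representation p/q
  (p, q coprime, q normalized nonzero): infinity exactly at the zeros of q.\<close>
definition eval_ratfun :: "complex poly fract \<Rightarrow> complex \<Rightarrow> complex option" where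
  "eval_ratfun r t = (case quot_of_fract r of (p, q) \<Rightarrow>
      if poly q t = 0 then None else Some (poly p t / poly q t))"

definition eval_marked :: "marked_point \<Rightarrow> complex \<Rightarrow> complex option" where
  "eval_marked c t = (case c of None \<Rightarrow> None | Some r \<Rightarrow> eval_ratfun r t)"

definition persistently_preperiodic :: "marked_point \<Rightarrow> bool" where
  "persistently_preperiodic c \<longleftrightarrow>
     (\<forall>t. t \<noteq> 0 \<and> t \<noteq> 1 \<longrightarrow> finite (range (\<lambda>n. (lattes t ^^ n) (eval_marked c t))))"

end

theory Submission
  imports Defs "HOL-Analysis.Continuum_Not_Denumerable"
begin

text \<open>
  The exceptional points 0, 1, \<infinity>, t are mapped to \<infinity> by f_t, which is fixed.
  For any other marked point c = p/q some iterate has a pole at some t0, coming either from a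
  zero of q or, for polynomial c, from a parameter t0 where c(t0) \<in> {0, 1, t0}.
  Writing the n-th iterate in homogeneous coordinates (X_n : Y_n) over \<complex>[t], the pole persists:
  Y_n/X_n vanishes at t0 to a fixed order k > 0 with leading coefficient 4^n \<rho>, because
  f_t(z) = z/4 + O(1) near z = \<infinity>. Hence the iterates are pairwise distinct rational functions,
  and for t outside the countably many roots of the determinants X_n Y_m - X_m Y_n the orbit
  of c(t) is infinite.
\<close>

definition lattes_lift :: "'a::comm_ring_1 \<Rightarrow> 'a \<times> 'a \<Rightarrow> 'a \<times> 'a" where
  "lattes_lift t z = (case z of (x, y) \<Rightarrow> ((x\<^sup>2 - t * y\<^sup>2)\<^sup>2, 4 * x * y * (x - y) * (x - t * y)))"

definition proj :: "'a::field \<times> 'a \<Rightarrow> 'a option" where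
  "proj z = (case z of (x, y) \<Rightarrow> if y = 0 then None else Some (x / y))"

definition poly_pair :: "'a::comm_semiring_0 poly \<times> 'a poly \<Rightarrow> 'a \<Rightarrow> 'a \<times> 'a" where
  "poly_pair z t = (poly (fst z) t, poly (snd z) t)"

lemma poly_pair_lattes_lift: "poly_pair (lattes_lift [:0, 1:] z) t = lattes_lift t (poly_pair z t)"
  by (cases z) (simp add: poly_pair_def lattes_lift_def)

lemma poly_pair_funpow_lattes_lift:
  "poly_pair ((lattes_lift [:0, 1:] ^^ n) z) t = (lattes_lift t ^^ n) (poly_pair z t)"
  by (induction n) (simp_all add: poly_pair_lattes_lift)

lemma lattes_lift_nonzero:
  fixes t :: "'a::{idom, ring_char_0}"
  assumes t: "t \<noteq> 0" "t \<noteq> 1" and z: "z \<noteq> (0, 0)"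
  shows "lattes_lift t z \<noteq> (0, 0)"
proof
  obtain x y where xy: "z = (x, y)" by (cases z)
  assume "lattes_lift t z = (0, 0)"
  then have num: "x\<^sup>2 = t * y\<^sup>2" and "x = 0 \<or> y = 0 \<or> x = y \<or> x = t * y"
    by (auto simp: lattes_lift_def xy)
  then have "y = 0"
  proof (elim disjE)
    assume "x = y"
    then have "(1 - t) * y\<^sup>2 = 0" using num by (simp add: algebra_simps)
    then show "y = 0" using t by simp
  next
    assume "x = t * y"
    then have "t * (t - 1) * y\<^sup>2 = 0" using num by (simp add: algebra_simps power2_eq_square)
    then show "y = 0" using t by simp
  qed (use num t in auto)
  with num show False using z xy by simp
qed

lemma lattes_proj:
  assumes "z \<noteq> (0, 0)"
  shows "lattes t (proj z) = proj (lattes_lift t z)"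
proof -
  obtain x y where xy: "z = (x, y)" by (cases z)
  show ?thesis
  proof (cases "y = 0")
    case True
    then show ?thesis using assms by (simp add: xy proj_def lattes_lift_def lattes_def)
  next
    case False
    define w where "w = x / y"
    have x: "x = w * y" using False by (simp add: w_def)
    have den: "4 * x * y * (x - y) * (x - t * y) = y ^ 4 * (4 * w * (w - 1) * (w - t))"
      and num: "(x\<^sup>2 - t * y\<^sup>2)\<^sup>2 = y ^ 4 * (w\<^sup>2 - t)\<^sup>2"
      unfolding x by (simp_all add: algebra_simps power4_eq_xxxx power2_eq_square)
    show ?thesis
      using False by (simp add: xy proj_def lattes_lift_def lattes_def den num w_def[symmetric])
  qed
qed

lemma funpow_lattes_lift_nonzero:
  fixes t :: "'a::{idom, ring_char_0}"
  assumes "t \<noteq> 0" "t \<noteq> 1" "z \<noteq> (0, 0)"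
  shows "(lattes_lift t ^^ n) z \<noteq> (0, 0)"
  by (induction n) (simp_all add: assms lattes_lift_nonzero)

lemma funpow_lattes_proj:
  assumes "t \<noteq> 0" "t \<noteq> 1" "z \<noteq> (0, 0)"
  shows "(lattes t ^^ n) (proj z) = proj ((lattes_lift t ^^ n) z)"
  by (induction n) (simp_all add: lattes_proj funpow_lattes_lift_nonzero assms)

lemma proj_eq_imp_cross_eq:
  assumes "z \<noteq> (0, 0)" "w \<noteq> (0, 0)" "proj z = proj w"
  shows "fst z * snd w = fst w * snd z"
  using assms by (cases z; cases w) (auto simp: proj_def field_simps split: if_splits)

text \<open>
  In the local coordinate t - t0, the second component of z vanishes to order exactly k more than
  the first, and \<rho> is the ratio of their leading coefficients.
\<close>

definition relative_pole :: "'a::comm_ring_1 \<Rightarrow> nat \<Rightarrow> 'a \<Rightarrow> 'a poly \<times> 'a poly \<Rightarrow> bool" where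
  "relative_pole t0 k \<rho> z \<longleftrightarrow> \<rho> \<noteq> 0 \<and> (\<exists>e A B.
     z = ([:-t0, 1:] ^ e * A, [:-t0, 1:] ^ (e + k) * B) \<and> poly A t0 \<noteq> 0 \<and> poly B t0 = \<rho> * poly A t0)"

lemma relative_pole_at_root:
  fixes X Y :: "'a::field poly"
  assumes "poly X t0 \<noteq> 0" "poly Y t0 = 0" "Y \<noteq> 0"
  shows "\<exists>k \<rho>. k > 0 \<and> relative_pole t0 k \<rho> (X, Y)"
proof -
  obtain B where B: "Y = [:-t0, 1:] ^ order t0 Y * B" "\<not> [:-t0, 1:] dvd B"
    using order_decomp[OF \<open>Y \<noteq> 0\<close>] by blast
  have "poly B t0 \<noteq> 0" using B(2) by (simp add: poly_eq_0_iff_dvd)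
  moreover have "order t0 Y > 0" using assms(2,3) order_root by blast
  ultimately have "relative_pole t0 (order t0 Y) (poly B t0 / poly X t0) (X, Y)"
    unfolding relative_pole_def using assms(1) B(1)
    by (intro conjI exI[of _ 0] exI[of _ X] exI[of _ B]) auto
  with \<open>order t0 Y > 0\<close> show ?thesis by blast
qed

lemma relative_pole_lattes_lift:
  fixes t0 :: "'a::{idom, ring_char_0}"
  assumes "k > 0" and "relative_pole t0 k \<rho> z"
  shows "relative_pole t0 k (4 * \<rho>) (lattes_lift [:0, 1:] z)"
proof -
  define h where "h = [:-t0, 1:]"
  obtain e A B where z: "z = (h ^ e * A, h ^ (e + k) * B)"
    and A: "poly A t0 \<noteq> 0" and B: "poly B t0 = \<rho> * poly A t0" and \<rho>: "\<rho> \<noteq> 0"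
    using assms(2) unfolding relative_pole_def h_def by blast
  define A' where "A' = (A\<^sup>2 - [:0, 1:] * (h ^ k)\<^sup>2 * B\<^sup>2)\<^sup>2"
  define B' where "B' = 4 * A * B * (A - h ^ k * B) * (A - [:0, 1:] * h ^ k * B)"
  have "lattes_lift [:0, 1:] z = ((h ^ e) ^ 4 * A', ((h ^ e) ^ 4 * h ^ k) * B')"
    unfolding z lattes_lift_def A'_def B'_def prod.case power_add
    by (simp only: prod_eq_iff fst_conv snd_conv) algebra
  also have "\<dots> = (h ^ (4 * e) * A', h ^ (4 * e + k) * B')"
    by (simp add: power_add mult.commute flip: power_mult)
  finally have "lattes_lift [:0, 1:] z = (h ^ (4 * e) * A', h ^ (4 * e + k) * B')" .
  moreover have "poly (h ^ k) t0 = 0" using \<open>k > 0\<close> by (simp add: h_def)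
  then have "poly A' t0 = poly A t0 ^ 4" "poly B' t0 = 4 * \<rho> * poly A t0 ^ 4"
    using \<open>k > 0\<close> by (simp_all add: A'_def B'_def B power4_eq_xxxx power2_eq_square zero_power)
  ultimately show ?thesis
    using A \<rho> unfolding relative_pole_def h_def
    by (intro conjI exI[of _ "4 * e"] exI[of _ A'] exI[of _ B']) auto
qed

lemma funpow_relative_pole_lattes_lift:
  fixes t0 :: "'a::{idom, ring_char_0}"
  assumes "k > 0" and "relative_pole t0 k \<rho> z"
  shows "relative_pole t0 k (4 ^ n * \<rho>) ((lattes_lift [:0, 1:] ^^ n) z)"
  by (induction n) (simp_all add: assms relative_pole_lattes_lift mult.assoc)

lemma relative_pole_cross_eq:
  fixes t0 :: "'a::idom"
  assumes "relative_pole t0 k \<rho> z" "relative_pole t0 k \<sigma> w"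
    and "fst z * snd w = fst w * snd z"
  shows "\<rho> = \<sigma>"
proof -
  define h where "h = [:-t0, 1:]"
  obtain e1 A1 B1 where z: "z = (h ^ e1 * A1, h ^ (e1 + k) * B1)"
    and A1: "poly A1 t0 \<noteq> 0" and B1: "poly B1 t0 = \<rho> * poly A1 t0"
    using assms(1) unfolding relative_pole_def h_def by blast
  obtain e2 A2 B2 where w: "w = (h ^ e2 * A2, h ^ (e2 + k) * B2)"
    and A2: "poly A2 t0 \<noteq> 0" and B2: "poly B2 t0 = \<sigma> * poly A2 t0"
    using assms(2) unfolding relative_pole_def h_def by blast
  have "h ^ (e1 + e2 + k) * (A1 * B2) = h ^ (e1 + e2 + k) * (A2 * B1)"
    using assms(3) by (simp add: z w power_add algebra_simps)
  then have "A1 * B2 = A2 * B1" by (simp add: h_def)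
  then have "poly A1 t0 * poly B2 t0 = poly A2 t0 * poly B1 t0" by (metis poly_mult)
  then have "(\<sigma> - \<rho>) * (poly A1 t0 * poly A2 t0) = 0"
    by (simp add: B1 B2 algebra_simps)
  then show ?thesis using A1 A2 by simp
qed

lemma funpow_lattes_lift_cross_neq:
  fixes t0 :: "'a::{idom, ring_char_0}"
  assumes "k > 0" "relative_pole t0 k \<rho> z" "n \<noteq> m"
  defines "Z \<equiv> \<lambda>n. (lattes_lift [:0, 1:] ^^ n) z"
  shows "fst (Z n) * snd (Z m) \<noteq> fst (Z m) * snd (Z n)"
proof
  assume "fst (Z n) * snd (Z m) = fst (Z m) * snd (Z n)"
  then have "4 ^ n * \<rho> = 4 ^ m * \<rho>"
    using relative_pole_cross_eq funpow_relative_pole_lattes_lift[OF assms(1,2)] unfolding Z_def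
    by blast
  moreover have "\<rho> \<noteq> 0" using assms(2) by (simp add: relative_pole_def)
  ultimately have "(of_nat (4 ^ n) :: 'a) = of_nat (4 ^ m)" by simp
  then show False using \<open>n \<noteq> m\<close> by (simp only: of_nat_eq_iff) simp
qed

lemma countable_roots_avoidable:
  fixes P :: "complex poly set"
  assumes "countable P" "0 \<notin> P" "countable F"
  shows "\<exists>t. t \<notin> F \<and> (\<forall>p\<in>P. poly p t \<noteq> 0)"
proof -
  have "countable (F \<union> (\<Union>p\<in>P. {t. poly p t = 0}))"
    using assms by (intro countable_Un countable_UN) (auto intro: countable_finite poly_roots_finite)
  then obtain t where "t \<notin> F \<union> (\<Union>p\<in>P. {t. poly p t = 0})"
    using uncountable_UNIV_complex by (metis UNIV_eq_I)
  then show ?thesis by blast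
qed

lemma infinite_orbit_if_relative_pole:
  assumes coprime: "\<And>t. poly_pair z t \<noteq> (0, 0)" and "k > 0"
    and pole: "relative_pole t0 k \<rho> ((lattes_lift [:0, 1:] ^^ N) z)"
  shows "\<exists>t. t \<noteq> 0 \<and> t \<noteq> 1 \<and>
           infinite (range (\<lambda>n. (lattes t ^^ n) (proj (poly_pair z t))))"
proof -
  define Z where "Z n = (lattes_lift [:0, 1:] ^^ (n + N)) z" for n
  define D where "D nm = fst (Z (fst nm)) * snd (Z (snd nm)) - fst (Z (snd nm)) * snd (Z (fst nm))"
    for nm
  have "0 \<notin> D ` {nm. fst nm \<noteq> snd nm}"
    using funpow_lattes_lift_cross_neq[OF \<open>k > 0\<close> pole]
    by (auto simp: D_def Z_def funpow_add)
  then obtain t where t: "t \<notin> {0, 1}" and D: "\<And>n m. n \<noteq> m \<Longrightarrow> poly (D (n, m)) t \<noteq> 0"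
    using countable_roots_avoidable[of "D ` {nm. fst nm \<noteq> snd nm}" "{0, 1}"] by fastforce
  define orbit where "orbit n = (lattes t ^^ n) (proj (poly_pair z t))" for n
  have orbit: "orbit (n + N) = proj (poly_pair (Z n) t)" for n
    using t coprime by (simp add: orbit_def Z_def funpow_lattes_proj poly_pair_funpow_lattes_lift)
  have nonzero: "poly_pair (Z n) t \<noteq> (0, 0)" for n
    using t coprime by (simp add: Z_def poly_pair_funpow_lattes_lift funpow_lattes_lift_nonzero)
  have "inj (\<lambda>n. orbit (n + N))"
  proof (rule injI)
    fix n m assume "orbit (n + N) = orbit (m + N)"
    then have "poly (D (n, m)) t = 0"
      using proj_eq_imp_cross_eq[OF nonzero nonzero] by (simp add: orbit D_def poly_pair_def)
    then show "n = m" using D by blast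
  qed
  then have "infinite (range (\<lambda>n. orbit (n + N)))" using finite_imageD by blast
  then have "infinite (range orbit)" by (rule infinite_super[rotated]) auto
  then show ?thesis using t unfolding orbit_def by blast
qed

lemma poly_eq_monomial_if_unique_root:
  fixes p :: "complex poly"
  assumes "p \<noteq> 0" and root: "\<And>t. poly p t = 0 \<Longrightarrow> t = r"
  shows "\<exists>a d. a \<noteq> 0 \<and> (\<forall>t. poly p t = a * (t - r) ^ d)"
proof -
  obtain B where B: "p = [:-r, 1:] ^ order r p * B" "\<not> [:-r, 1:] dvd B"
    using order_decomp[OF \<open>p \<noteq> 0\<close>] by blast
  have "poly B t \<noteq> 0" for t
  proof
    assume "poly B t = 0"
    moreover from this have "t = r" by (intro root) (subst B(1), simp)
    ultimately show False using B(2) by (simp add: poly_eq_0_iff_dvd)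
  qed
  then obtain a where "a \<noteq> 0" "B = [:a:]"
    using fundamental_theorem_of_algebra_alt[of B] by blast
  then show ?thesis by (intro exI[of _ a] exI[of _ "order r p"]) (subst B(1), simp add: mult.commute)
qed

lemma poly_eq_X_if_no_extra_preimages:
  fixes p :: "complex poly"
  assumes "p \<noteq> 0" "p \<noteq> 1"
    and zeros: "\<And>t. poly p t = 0 \<Longrightarrow> t = 0" and ones: "\<And>t. poly p t = 1 \<Longrightarrow> t = 1"
    and fixed: "\<And>t. poly p t = t \<Longrightarrow> t = 0 \<or> t = 1"
  shows "p = [:0, 1:]"
proof -
  txt \<open>p = a t^d and p - 1 = b (t - 1)^j; evaluating at 0, 1, 2 forces a = 1, b^2 = 1, d = 1.\<close>
  obtain a d where "a \<noteq> 0" and p: "\<And>t. poly p t = a * t ^ d"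
    using poly_eq_monomial_if_unique_root[OF \<open>p \<noteq> 0\<close> zeros] by auto
  have "d \<noteq> 0"
  proof
    assume "d = 0"
    then have "p = [:a:]" using p by (simp add: poly_eq_poly_eq_iff[symmetric] fun_eq_iff)
    with assms(2) have "a \<noteq> 1" by (auto simp: one_pCons)
    then show False using fixed[of a] p \<open>d = 0\<close> \<open>a \<noteq> 0\<close> by simp
  qed
  obtain b j where p1: "\<And>t. poly p t - 1 = b * (t - 1) ^ j"
    using poly_eq_monomial_if_unique_root[of "p - 1" 1] assms(2) ones by auto
  have "j \<noteq> 0"
  proof
    assume "j = 0"
    then have "poly p 1 = poly p 0"
      using p1[of 0] p1[of 1] by (metis diff_add_cancel power_0 mult.right_neutral)
    then show False using p \<open>a \<noteq> 0\<close> \<open>d \<noteq> 0\<close> by (simp add: zero_power)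
  qed
  have "a = 1" using p1[of 1] p \<open>j \<noteq> 0\<close> by (simp add: zero_power)
  have "b * (-1) ^ j = -1" using p1[of 0] p \<open>d \<noteq> 0\<close> by (simp add: zero_power)
  then have "b\<^sup>2 * ((-1) ^ j)\<^sup>2 = 1" by (metis power_mult_distrib power2_minus power_one)
  then have "b\<^sup>2 = 1" by (simp flip: power_mult add: mult.commute[of j])
  moreover have "b = 2 ^ d - 1" using p1[of 2] p \<open>a = 1\<close> by simp
  ultimately have "(2::complex) ^ d * (2 ^ d - 2) = 0" by (simp add: algebra_simps power2_eq_square)
  then have "(2::complex) ^ d = 2" by simp
  then have "(2::nat) ^ d = 2 ^ 1"
    by (metis of_nat_eq_of_nat_power_cancel_iff of_nat_numeral power_one_right)
  then have "d = 1" by (simp only: power_inject_exp)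
  then have "poly p = poly [:0, 1:]" using p \<open>a = 1\<close> by auto
  then show ?thesis using poly_eq_poly_eq_iff by blast
qed

text \<open>0, 1, t0 are the finite poles of f_{t0}, and the numerator (z^2 - t0)^2 does not vanish there.\<close>

lemma poly_hits_lattes_pole:
  fixes p :: "complex poly"
  assumes "p \<notin> {0, 1, [:0, 1:]}"
  shows "\<exists>t0. poly p t0 \<in> {0, 1, t0} \<and> (poly p t0)\<^sup>2 \<noteq> t0"
proof (rule ccontr)
  assume "\<not> ?thesis"
  then have poles: "\<And>t. poly p t \<in> {0, 1, t} \<Longrightarrow> (poly p t)\<^sup>2 = t" by blast
  have "p = [:0, 1:]"
  proof (rule poly_eq_X_if_no_extra_preimages)
    fix t
    show "poly p t = 0 \<Longrightarrow> t = 0" "poly p t = 1 \<Longrightarrow> t = 1" using poles[of t] by auto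
    show "poly p t = t \<Longrightarrow> t = 0 \<or> t = 1"
      using poles[of t] by (auto simp: power2_eq_square)
  qed (use assms in auto)
  with assms show False by simp
qed

lemma coprime_poly_pair_nonzero:
  fixes p q :: "'a::field poly"
  assumes "coprime p q"
  shows "poly_pair (p, q) t \<noteq> (0, 0)"
proof
  assume "poly_pair (p, q) t = (0, 0)"
  then have "[:-t, 1:] dvd p" "[:-t, 1:] dvd q" by (auto simp: poly_pair_def poly_eq_0_iff_dvd)
  with assms have "is_unit [:-t, 1:]" using coprime_common_divisor by blast
  then show False by (simp add: is_unit_poly_iff)
qed

lemma reduced_fract_relative_pole:
  fixes r :: "complex poly fract"
  assumes pq: "quot_of_fract r = (p, q)" and r: "r \<notin> {0, 1, Fract [:0, 1:] 1}"
  shows "\<exists>N t0 k \<rho>. k > 0 \<and> relative_pole t0 k \<rho> ((lattes_lift [:0, 1:] ^^ N) (p, q))"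
proof (cases "degree q = 0")
  case False
  then obtain t0 where "poly q t0 = 0"
    using fundamental_theorem_of_algebra_alt[of q] by fastforce
  moreover have "coprime p q" "q \<noteq> 0"
    using coprime_quot_of_fract[of r] snd_quot_of_fract_nonzero[of r] pq by simp_all
  ultimately have "poly p t0 \<noteq> 0"
    using coprime_poly_pair_nonzero[of p q t0] by (simp add: poly_pair_def)
  with \<open>poly q t0 = 0\<close> \<open>q \<noteq> 0\<close> obtain k \<rho> where "k > 0" "relative_pole t0 k \<rho> (p, q)"
    using relative_pole_at_root by blast
  then show ?thesis by (metis funpow_0)
next
  case True
  then have "q = 1"
    using snd_quot_of_fract_nonzero[of r] normalize_snd_quot_of_fract[of r] pq
    by (simp add: is_unit_iff_degree is_unit_normalize)
  then have "r = Fract p 1" using Fract_quot_of_fract[of r] pq by simp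
  with r have p: "p \<notin> {0, 1, [:0, 1:]}" by (auto simp: Zero_fract_def One_fract_def)
  then obtain t0 where t0: "poly p t0 \<in> {0, 1, t0}" "(poly p t0)\<^sup>2 \<noteq> t0"
    using poly_hits_lattes_pole by blast
  define P Q where "P = (p\<^sup>2 - [:0, 1:])\<^sup>2" and "Q = 4 * p * (p - 1) * (p - [:0, 1:])"
  have lift: "(lattes_lift [:0, 1:] ^^ 1) (p, q) = (P, Q)"
    unfolding lattes_lift_def P_def Q_def \<open>q = 1\<close>
    by (simp only: funpow_0 funpow.simps(2) One_nat_def o_apply prod.case power_one mult_1_right)
  have "poly P t0 \<noteq> 0" "poly Q t0 = 0" "Q \<noteq> 0"
    using t0 p by (auto simp: P_def Q_def)
  then obtain k \<rho> where "k > 0" "relative_pole t0 k \<rho> (P, Q)"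
    using relative_pole_at_root by blast
  then show ?thesis by (metis lift)
qed

lemma eval_marked_Some: "eval_marked (Some r) t = proj (poly_pair (quot_of_fract r) t)"
  by (simp add: eval_marked_def eval_ratfun_def proj_def poly_pair_def split: prod.splits)

lemma quot_of_fract_X: "quot_of_fract (Fract [:0, 1:] (1::complex poly)) = ([:0, 1:], 1)"
  using quot_of_fract_quot_to_fract'[of "([:0, 1:], 1)"]
  by (simp add: quot_to_fract_def normalized_fracts_def)

lemma finite_orbit_if_lattes_None:
  assumes "lattes t x = None"
  shows "finite (range (\<lambda>n. (lattes t ^^ n) x))"
proof -
  have "lattes t None = None" by (simp add: lattes_def)
  then have "(lattes t ^^ Suc n) x = None" for n
    by (induction n) (simp_all add: assms)
  then have "(lattes t ^^ n) x \<in> {x, None}" for n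
    by (cases n) simp_all
  then have "range (\<lambda>n. (lattes t ^^ n) x) \<subseteq> {x, None}"
    by (intro image_subsetI)
  then show ?thesis by (rule finite_subset) simp
qed

lemma lattes_eval_marked_exceptional:
  assumes "c \<in> {Some 0, Some 1, None, Some (Fract [:0, 1:] 1)}"
  shows "lattes t (eval_marked c t) = None"
  using assms
  by (elim insertE emptyE) (simp_all add: eval_marked_def eval_ratfun_def quot_of_fract_X lattes_def)

theorem proposition1p4:
  fixes c :: marked_point
  shows "persistently_preperiodic c \<longleftrightarrow>
           c \<in> {Some 0, Some 1, None, Some (Fract [:0, 1:] 1)}"
proof
  assume "c \<in> {Some 0, Some 1, None, Some (Fract [:0, 1:] 1)}"
  then show "persistently_preperiodic c"
    unfolding persistently_preperiodic_def
    using finite_orbit_if_lattes_None lattes_eval_marked_exceptional by blast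
next
  assume pp: "persistently_preperiodic c"
  show "c \<in> {Some 0, Some 1, None, Some (Fract [:0, 1:] 1)}"
  proof (rule ccontr)
    assume "c \<notin> {Some 0, Some 1, None, Some (Fract [:0, 1:] 1)}"
    then obtain r where c: "c = Some r" and r: "r \<notin> {0, 1, Fract [:0, 1:] 1}"
      by (cases c) auto
    obtain p q where pq: "quot_of_fract r = (p, q)" by fastforce
    have "poly_pair (p, q) t \<noteq> (0, 0)" for t
      using coprime_quot_of_fract[of r] coprime_poly_pair_nonzero pq by simp
    moreover obtain N t0 k \<rho> where "k > 0" "relative_pole t0 k \<rho> ((lattes_lift [:0, 1:] ^^ N) (p, q))"
      using reduced_fract_relative_pole[OF pq r] by blast
    ultimately obtain t where "t \<noteq> 0" "t \<noteq> 1"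
      "infinite (range (\<lambda>n. (lattes t ^^ n) (proj (poly_pair (p, q) t))))"
      using infinite_orbit_if_relative_pole by blast
    with pp show False
      unfolding persistently_preperiodic_def c eval_marked_Some pq by blast
  qed
qed

end
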